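(* Let $M$ be a non-empty manifold of dimension $m$. Then every countable subset of $M$ is contained in an open subset of $M$ which is homeomorphic to $\mathbb{R}^m$. Consequently, every two points of $M$ may be joined by an arc.
   Context: A manifold is a connected Hausdorff topological space which is locally homeomorphic to some euclidean space $\mathbb{R}^m$ (manifolds have no boundary); by connectedness $m$ is an invariant of the (non-empty) manifold, called its dimension. An arc is a subspace homeomorphic to $[0,1]$. *)

theory Defs
  imports "HOL-Analysis.Analysis"
begin

definition manifold_of_dim :: "'a topology \<Rightarrow> nat \<Rightarrow> bool" where
  "manifold_of_dim M m \<longleftrightarrow>
     connected_space M \<and> Hausdorff_space M \<and>
     (\<forall>x \<in> topspace M. \<exists>U. openin M U \<and> x \<in> U \<and>
         subtopology M U homeomorphic_space Euclidean_space m)"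

definition arc_joining :: "'a topology \<Rightarrow> 'a \<Rightarrow> 'a \<Rightarrow> bool" where
  "arc_joining M x y \<longleftrightarrow>
     (\<exists>g. embedding_map (top_of_set {0..1::real}) M g \<and> g 0 = x \<and> g 1 = y)"

end

theory Submission
  imports Defs
begin

text \<open>A connected manifold is homogeneous relative to compact sets: if \<open>K\<close> is compact and
  \<open>U \<supseteq> K\<close> is open and non-empty, every point is the image of a point of \<open>U\<close> under some
  homeomorphism fixing \<open>K\<close> pointwise, since the points that can be moved in this way form a
  clopen set. Enumerate the countable set as \<open>c 0, c 1, \<dots>\<close> and start from the inverse \<open>e 0\<close>
  of a chart, an open embedding of \<open>\<real>\<^sup>m\<close>. Compose \<open>e n\<close> with a homeomorphism that fixes the
  image of the closed ball of radius \<open>R n\<close> and brings \<open>c n\<close> into the image of a ball of radius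
  \<open>R (n + 1) \<ge> R n + 1\<close>. The embeddings \<open>e n\<close> stabilise on every ball, so they converge to an open
  embedding of \<open>\<real>\<^sup>m\<close> whose image contains every \<open>c n\<close>. Any two points lie in such a cell, and
  the image of the segment between their coordinates is an arc.\<close>

section \<open>The l1-metric on Euclidean space\<close>

text \<open>The type \<open>nat \<Rightarrow> real\<close> carries no Euclidean norm, so \<open>Euclidean_space m\<close> is metrised
  by the l1-distance of the first \<open>m\<close> coordinates.\<close>

definition l1_dist :: "nat \<Rightarrow> (nat \<Rightarrow> real) \<Rightarrow> (nat \<Rightarrow> real) \<Rightarrow> real" where
  "l1_dist m x y = (\<Sum>i<m. \<bar>x i - y i\<bar>)"

definition l1_ball :: "nat \<Rightarrow> (nat \<Rightarrow> real) \<Rightarrow> real \<Rightarrow> (nat \<Rightarrow> real) set" where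
  "l1_ball m a r = {x \<in> topspace (Euclidean_space m). l1_dist m x a < r}"

definition l1_cball :: "nat \<Rightarrow> (nat \<Rightarrow> real) \<Rightarrow> real \<Rightarrow> (nat \<Rightarrow> real) set" where
  "l1_cball m a r = {x \<in> topspace (Euclidean_space m). l1_dist m x a \<le> r}"

lemma l1_dist_nonneg: "0 \<le> l1_dist m x y"
  by (simp add: l1_dist_def sum_nonneg)

lemma l1_dist_self [simp]: "l1_dist m x x = 0"
  by (simp add: l1_dist_def)

lemma l1_dist_commute: "l1_dist m x y = l1_dist m y x"
  by (simp add: l1_dist_def abs_minus_commute)

lemma l1_dist_triangle: "l1_dist m x z \<le> l1_dist m x y + l1_dist m y z"
  unfolding l1_dist_def sum.distrib[symmetric] by (rule sum_mono) linarith

lemma component_le_l1_dist: "i < m \<Longrightarrow> \<bar>x i - y i\<bar> \<le> l1_dist m x y"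
  unfolding l1_dist_def by (rule member_le_sum) auto

lemma l1_dist_eq_0_iff:
  assumes "x \<in> topspace (Euclidean_space m)" "y \<in> topspace (Euclidean_space m)"
  shows "l1_dist m x y = 0 \<longleftrightarrow> x = y"
proof
  assume "l1_dist m x y = 0"
  then have "x i = y i" if "i < m" for i
    using component_le_l1_dist[OF that, of x y] by simp
  moreover have "x i = y i" if "\<not> i < m" for i
    using assms that by (simp add: topspace_Euclidean_space)
  ultimately show "x = y"
    by blast
qed simp

lemma continuous_map_Euclidean_space_component:
  "continuous_map (Euclidean_space m) euclideanreal (\<lambda>x. x i)"
  unfolding Euclidean_space_def
  by (intro continuous_map_from_subtopology continuous_map_product_projection) auto

lemma continuous_map_l1_dist:
  "continuous_map (Euclidean_space m) euclideanreal (\<lambda>x. l1_dist m x a)"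
  unfolding l1_dist_def
  by (intro continuous_intros continuous_map_Euclidean_space_component) auto

lemma openin_l1_ball: "openin (Euclidean_space m) (l1_ball m a r)"
  using openin_continuous_map_preimage[OF continuous_map_l1_dist, of "{..<r}"]
  by (simp add: l1_ball_def)

lemma closedin_l1_cball: "closedin (Euclidean_space m) (l1_cball m a r)"
  using closedin_continuous_map_preimage[OF continuous_map_l1_dist, of "{..r}"]
  by (simp add: l1_cball_def)

lemma l1_ball_subset_cball: "l1_ball m a r \<subseteq> l1_cball m a r"
  by (auto simp: l1_ball_def l1_cball_def)

lemma compactin_l1_cball: "compactin (Euclidean_space m) (l1_cball m a r)"
proof -
  define S where "S i = (if i < m then {a i - r..a i + r} else {0::real})" for i
  have "compactin (powertop_real UNIV) (Pi\<^sub>E UNIV S)"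
    by (subst compactin_PiE) (auto simp: S_def)
  then have "compactin (Euclidean_space m) (Pi\<^sub>E UNIV S)"
    by (auto simp: Euclidean_space_def compactin_subtopology S_def PiE_iff split: if_splits)
  moreover have "l1_cball m a r \<subseteq> Pi\<^sub>E UNIV S"
  proof
    fix x assume x: "x \<in> l1_cball m a r"
    have "x i \<in> S i" for i
      using x component_le_l1_dist[of i m x a]
      by (auto simp: l1_cball_def S_def topspace_Euclidean_space abs_le_iff)
    then show "x \<in> Pi\<^sub>E UNIV S" by auto
  qed
  ultimately show ?thesis
    using closed_compactin closedin_l1_cball by blast
qed

lemma openin_Euclidean_space_contains_l1_ball:
  assumes "openin (Euclidean_space m) V" "a \<in> V"
  obtains r where "r > 0" "l1_ball m a r \<subseteq> V"
proof -
  define E where "E = topspace (Euclidean_space m)"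
  obtain T where T: "openin (powertop_real UNIV) T" "V = T \<inter> E"
    using assms(1) by (auto simp: Euclidean_space_def openin_subtopology E_def)
  then obtain U where U: "finite {i. U i \<noteq> UNIV}" "\<And>i. open (U i)" "a \<in> Pi\<^sub>E UNIV U"
    "Pi\<^sub>E UNIV U \<subseteq> T"
    using assms(2) unfolding openin_product_topology_alt by fastforce
  define F where "F = {i. U i \<noteq> UNIV}"
  have "\<forall>i\<in>F. \<exists>e>0. ball (a i) e \<subseteq> U i"
    using U by (meson PiE_E UNIV_I openE)
  then obtain e where e: "\<And>i. i \<in> F \<Longrightarrow> e i > 0 \<and> ball (a i) (e i) \<subseteq> U i"
    by metis
  define r where "r = Min (insert 1 (e ` F))"
  have "r > 0"
    using U(1) e by (auto simp: r_def F_def)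
  moreover have "l1_ball m a r \<subseteq> V"
  proof
    fix x assume x: "x \<in> l1_ball m a r"
    have "x i \<in> U i" for i
    proof (cases "i \<in> F \<and> i < m")
      case True
      have "\<bar>x i - a i\<bar> < r"
        using x component_le_l1_dist[of i m x a] True by (auto simp: l1_ball_def)
      also have "r \<le> e i"
        using U(1) True by (auto simp: r_def F_def)
      finally have "x i \<in> ball (a i) (e i)"
        by (simp add: dist_real_def abs_minus_commute)
      then show ?thesis
        using e True by blast
    next
      case False
      moreover have "a \<in> E" using assms T by auto
      ultimately have "U i = UNIV \<or> x i = a i"
        using x by (auto simp: F_def E_def l1_ball_def topspace_Euclidean_space)
      then show ?thesis
        using U(3) by auto
    qed
    then show "x \<in> V"
      using U(4) T x by (auto simp: E_def l1_ball_def)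
  qed
  ultimately show ?thesis using that by blast
qed

section \<open>Bi-Lipschitz homeomorphisms of Euclidean space\<close>

lemma Lipschitz_imp_continuous_map_Euclidean_space:
  assumes maps: "g \<in> topspace (Euclidean_space m) \<rightarrow> topspace (Euclidean_space m)"
    and "C > 0"
    and Lipschitz: "\<And>x y. \<lbrakk>x \<in> topspace (Euclidean_space m); y \<in> topspace (Euclidean_space m)\<rbrakk>
                     \<Longrightarrow> l1_dist m (g x) (g y) \<le> C * l1_dist m x y"
  shows "continuous_map (Euclidean_space m) (Euclidean_space m) g"
  unfolding continuous_map_def
proof (intro conjI allI impI maps)
  fix U assume U: "openin (Euclidean_space m) U"
  show "openin (Euclidean_space m) {x \<in> topspace (Euclidean_space m). g x \<in> U}"
  proof (subst openin_subopen, intro ballI)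
    fix x assume x: "x \<in> {x \<in> topspace (Euclidean_space m). g x \<in> U}"
    then obtain r where r: "r > 0" "l1_ball m (g x) r \<subseteq> U"
      using openin_Euclidean_space_contains_l1_ball[OF U] by blast
    have sub: "l1_ball m x (r / C) \<subseteq> {x \<in> topspace (Euclidean_space m). g x \<in> U}"
    proof
      fix z assume z: "z \<in> l1_ball m x (r / C)"
      then have "l1_dist m (g z) (g x) \<le> C * l1_dist m z x"
        using Lipschitz x by (simp add: l1_ball_def)
      also have "\<dots> < r"
        using z \<open>C > 0\<close> by (simp add: l1_ball_def pos_less_divide_eq mult.commute)
      finally have "g z \<in> l1_ball m (g x) r"
        using maps z by (auto simp: l1_ball_def)
      then show "z \<in> {x \<in> topspace (Euclidean_space m). g x \<in> U}"
        using r(2) z by (auto simp: l1_ball_def)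
    qed
    have center: "x \<in> l1_ball m x (r / C)"
      using x r \<open>C > 0\<close> by (simp add: l1_ball_def)
    show "\<exists>T. openin (Euclidean_space m) T \<and> x \<in> T \<and>
                       T \<subseteq> {x \<in> topspace (Euclidean_space m). g x \<in> U}"
      using openin_l1_ball sub center by blast
  qed
qed

lemma l1_dist_Lipschitz_shift:
  assumes \<phi>: "\<And>x y. \<bar>\<phi> x - \<phi> y\<bar> \<le> L * l1_dist m x y"
  shows "l1_dist m (\<lambda>i. x i + \<phi> x * (q i - a i)) (\<lambda>i. y i + \<phi> y * (q i - a i))
           \<le> (1 + L * l1_dist m q a) * l1_dist m x y"
    and "(1 - L * l1_dist m q a) * l1_dist m x y
           \<le> l1_dist m (\<lambda>i. x i + \<phi> x * (q i - a i)) (\<lambda>i. y i + \<phi> y * (q i - a i))"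
proof -
  define \<psi> where "\<psi> x i = x i + \<phi> x * (q i - a i)" for x i
  have "\<bar>\<psi> x i - \<psi> y i\<bar> \<le> \<bar>x i - y i\<bar> + \<bar>\<phi> x - \<phi> y\<bar> * \<bar>q i - a i\<bar>"
    and "\<bar>x i - y i\<bar> \<le> \<bar>\<psi> x i - \<psi> y i\<bar> + \<bar>\<phi> x - \<phi> y\<bar> * \<bar>q i - a i\<bar>" for i
  proof -
    have "\<bar>(\<psi> x i - \<psi> y i) - (x i - y i)\<bar> = \<bar>\<phi> x - \<phi> y\<bar> * \<bar>q i - a i\<bar>"
      by (simp add: \<psi>_def abs_mult[symmetric] algebra_simps)
    then show "\<bar>\<psi> x i - \<psi> y i\<bar> \<le> \<bar>x i - y i\<bar> + \<bar>\<phi> x - \<phi> y\<bar> * \<bar>q i - a i\<bar>"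
      and "\<bar>x i - y i\<bar> \<le> \<bar>\<psi> x i - \<psi> y i\<bar> + \<bar>\<phi> x - \<phi> y\<bar> * \<bar>q i - a i\<bar>"
      by linarith+
  qed
  then have "l1_dist m (\<psi> x) (\<psi> y) \<le> l1_dist m x y + \<bar>\<phi> x - \<phi> y\<bar> * l1_dist m q a"
    and "l1_dist m x y \<le> l1_dist m (\<psi> x) (\<psi> y) + \<bar>\<phi> x - \<phi> y\<bar> * l1_dist m q a"
    unfolding l1_dist_def sum_distrib_left sum.distrib[symmetric] by (simp_all add: sum_mono)
  moreover have "\<bar>\<phi> x - \<phi> y\<bar> * l1_dist m q a \<le> L * l1_dist m x y * l1_dist m q a"
    using \<phi> l1_dist_nonneg by (intro mult_right_mono) auto
  ultimately show "l1_dist m (\<psi> x) (\<psi> y) \<le> (1 + L * l1_dist m q a) * l1_dist m x y"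
    and "(1 - L * l1_dist m q a) * l1_dist m x y \<le> l1_dist m (\<psi> x) (\<psi> y)"
    by (simp_all add: algebra_simps)
qed

lemma bi_Lipschitz_surjective_imp_homeomorphic_map:
  assumes maps: "\<psi> \<in> topspace (Euclidean_space m) \<rightarrow> topspace (Euclidean_space m)"
    and onto: "topspace (Euclidean_space m) \<subseteq> \<psi> ` topspace (Euclidean_space m)"
    and "k > 0" "C > 0"
    and lower: "\<And>x y. \<lbrakk>x \<in> topspace (Euclidean_space m); y \<in> topspace (Euclidean_space m)\<rbrakk>
                  \<Longrightarrow> k * l1_dist m x y \<le> l1_dist m (\<psi> x) (\<psi> y)"
    and upper: "\<And>x y. \<lbrakk>x \<in> topspace (Euclidean_space m); y \<in> topspace (Euclidean_space m)\<rbrakk>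
                  \<Longrightarrow> l1_dist m (\<psi> x) (\<psi> y) \<le> C * l1_dist m x y"
  shows "homeomorphic_map (Euclidean_space m) (Euclidean_space m) \<psi>"
proof -
  define E where "E = topspace (Euclidean_space m)"
  define \<psi>' where "\<psi>' = inv_into E \<psi>"
  have inj: "inj_on \<psi> E"
  proof (rule inj_onI)
    fix x y assume "x \<in> E" "y \<in> E" "\<psi> x = \<psi> y"
    then have "k * l1_dist m x y \<le> 0" using lower[of x y] by (simp add: E_def)
    then have "l1_dist m x y = 0"
      using \<open>k > 0\<close> l1_dist_nonneg[of m x y] by (simp add: mult_le_0_iff)
    then show "x = y"
      using l1_dist_eq_0_iff \<open>x \<in> E\<close> \<open>y \<in> E\<close> by (simp add: E_def)
  qed
  have \<psi>': "\<psi>' y \<in> E" "\<psi> (\<psi>' y) = y" if "y \<in> E" for y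
  proof -
    have "y \<in> \<psi> ` E"
      using that onto by (auto simp: E_def)
    then show "\<psi>' y \<in> E" "\<psi> (\<psi>' y) = y"
      by (simp_all add: \<psi>'_def inv_into_into f_inv_into_f)
  qed
  have "continuous_map (Euclidean_space m) (Euclidean_space m) \<psi>'"
  proof (rule Lipschitz_imp_continuous_map_Euclidean_space)
    show "\<psi>' \<in> topspace (Euclidean_space m) \<rightarrow> topspace (Euclidean_space m)"
      using \<psi>' by (auto simp: E_def)
    fix x y assume "x \<in> topspace (Euclidean_space m)" "y \<in> topspace (Euclidean_space m)"
    then have "k * l1_dist m (\<psi>' x) (\<psi>' y) \<le> l1_dist m x y"
      using lower[of "\<psi>' x" "\<psi>' y"] \<psi>' by (simp add: E_def)
    then show "l1_dist m (\<psi>' x) (\<psi>' y) \<le> 1 / k * l1_dist m x y"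
      using \<open>k > 0\<close> by (simp add: field_simps)
  qed (use \<open>k > 0\<close> in simp)
  moreover have "continuous_map (Euclidean_space m) (Euclidean_space m) \<psi>"
    using Lipschitz_imp_continuous_map_Euclidean_space[OF maps \<open>C > 0\<close> upper] .
  ultimately have "homeomorphic_maps (Euclidean_space m) (Euclidean_space m) \<psi> \<psi>'"
    using \<psi>' inj by (auto simp: homeomorphic_maps_def \<psi>'_def E_def)
  then show ?thesis
    using homeomorphic_map_maps by blast
qed

lemma exists_shift_at_l1_dist:
  assumes "0 < r" "l1_dist m y a < r"
  obtains t where "0 \<le> t" "t \<le> r" "l1_dist m (\<lambda>i. y i - (1 - t / r) * (q i - a i)) a = t"
proof -
  define h where "h t = l1_dist m (\<lambda>i. y i - (1 - t / r) * (q i - a i)) a - t" for t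
  have "h r \<le> 0"
    using assms by (simp add: h_def)
  moreover have "0 \<le> h 0"
    by (simp add: h_def l1_dist_nonneg)
  moreover have "continuous_on {0..r} h"
    unfolding h_def l1_dist_def by (intro continuous_intros) (use assms(1) in auto)
  ultimately show ?thesis
    using IVT2'[of h r 0 0] assms(1) that by (force simp: h_def)
qed

text \<open>The homeomorphism pushes the point along the direction \<open>q - a\<close>, with a weight
  decreasing linearly from 1 at \<open>a\<close> to 0 at l1-distance \<open>r\<close>; this weight is \<open>1/r\<close>-Lipschitz,
  so \<open>l1_dist m q a < r\<close> makes the map bi-Lipschitz.\<close>

lemma Euclidean_space_homeomorphism_moving_point:
  assumes a: "a \<in> topspace (Euclidean_space m)" and q: "q \<in> topspace (Euclidean_space m)"
    and qa: "l1_dist m q a < r"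
  obtains \<psi> \<psi>' where "homeomorphic_maps (Euclidean_space m) (Euclidean_space m) \<psi> \<psi>'" "\<psi> a = q"
    "\<And>x. x \<in> topspace (Euclidean_space m) - l1_ball m a r \<Longrightarrow> \<psi> x = x \<and> \<psi>' x = x"
proof -
  define E where "E = topspace (Euclidean_space m)"
  define \<phi> where "\<phi> x = max 0 (1 - l1_dist m x a / r)" for x
  define \<psi> where "\<psi> x = (\<lambda>i. x i + \<phi> x * (q i - a i))" for x
  have "r > 0"
    using qa l1_dist_nonneg[of m q a] by linarith
  have \<phi>_Lipschitz: "\<bar>\<phi> x - \<phi> y\<bar> \<le> 1 / r * l1_dist m x y" for x y
  proof -
    have "\<bar>l1_dist m x a - l1_dist m y a\<bar> \<le> l1_dist m x y"
      using l1_dist_triangle[of m x a y] l1_dist_triangle[of m y a x] l1_dist_commute[of m x y]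
      by linarith
    then have "\<bar>l1_dist m x a / r - l1_dist m y a / r\<bar> \<le> l1_dist m x y / r"
      using \<open>r > 0\<close> by (simp add: diff_divide_distrib[symmetric] divide_right_mono)
    then show ?thesis
      unfolding \<phi>_def by simp
  qed
  have \<psi>_fixes: "\<psi> x = x" if "x \<notin> l1_ball m a r" "x \<in> E" for x
    using that \<open>r > 0\<close> by (simp add: \<phi>_def \<psi>_def l1_ball_def E_def)
  have maps: "\<psi> \<in> E \<rightarrow> E"
    using a q by (auto simp: \<psi>_def E_def topspace_Euclidean_space)
  have onto: "E \<subseteq> \<psi> ` E"
  proof
    fix y assume y: "y \<in> E"
    show "y \<in> \<psi> ` E"
    proof (cases "y \<in> l1_ball m a r")
      case True
      then have "l1_dist m y a < r"
        by (simp add: l1_ball_def)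
      then obtain t where t: "0 \<le> t" "t \<le> r"
        "l1_dist m (\<lambda>i. y i - (1 - t / r) * (q i - a i)) a = t"
        using exists_shift_at_l1_dist[OF \<open>r > 0\<close>, where q = q] by blast
      define x where "x = (\<lambda>i. y i - (1 - t / r) * (q i - a i))"
      have "\<phi> x = 1 - t / r"
        using t \<open>r > 0\<close> by (simp add: \<phi>_def x_def)
      then have "\<psi> x = y"
        by (simp add: \<psi>_def x_def)
      moreover have "x \<in> E"
        using y a q by (simp add: x_def E_def topspace_Euclidean_space)
      ultimately show ?thesis by blast
    next
      case False
      then have "\<psi> y = y"
        using \<psi>_fixes y by simp
      then show ?thesis
        using y by (metis image_eqI)
    qed
  qed
  have "homeomorphic_map (Euclidean_space m) (Euclidean_space m) \<psi>"
  proof (rule bi_Lipschitz_surjective_imp_homeomorphic_map)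
    show "0 < 1 - 1 / r * l1_dist m q a" "0 < 1 + 1 / r * l1_dist m q a"
      using qa \<open>r > 0\<close> l1_dist_nonneg[of m q a] by (auto simp: field_simps)
    fix x y
    show "(1 - 1 / r * l1_dist m q a) * l1_dist m x y \<le> l1_dist m (\<psi> x) (\<psi> y)"
      and "l1_dist m (\<psi> x) (\<psi> y) \<le> (1 + 1 / r * l1_dist m q a) * l1_dist m x y"
      unfolding \<psi>_def by (intro l1_dist_Lipschitz_shift \<phi>_Lipschitz)+
  qed (use maps onto in \<open>simp_all add: E_def\<close>)
  then obtain \<psi>' where \<psi>': "homeomorphic_maps (Euclidean_space m) (Euclidean_space m) \<psi> \<psi>'"
    using homeomorphic_map_maps by blast
  moreover have "\<psi> a = q"
    by (simp add: \<psi>_def \<phi>_def)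
  moreover have "\<psi>' x = x" if "x \<in> E - l1_ball m a r" for x
    using \<psi>' \<psi>_fixes[of x] that by (auto simp: homeomorphic_maps_def E_def)
  ultimately show ?thesis
    using that \<psi>_fixes by (auto simp: E_def)
qed

section \<open>Extending homeomorphisms from charts\<close>

lemma continuous_map_cases_openin:
  assumes "openin X S" "openin X T" "topspace X \<subseteq> S \<union> T"
    and f: "continuous_map (subtopology X S) Y f" and g: "continuous_map (subtopology X T) Y g"
    and fg: "\<And>x. x \<in> S \<inter> T \<Longrightarrow> f x = g x"
  shows "continuous_map X Y (\<lambda>x. if x \<in> S then f x else g x)"
proof (rule pasting_lemma[where I = "{True, False}" and T = "\<lambda>b. if b then S else T"
                             and f = "\<lambda>b. if b then f else g"])
  show "\<exists>j. j \<in> {True, False} \<and> x \<in> (if j then S else T) \<and>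
          (if x \<in> S then f x else g x) = (if j then f else g) x" if "x \<in> topspace X" for x
    using that assms(3) by (cases "x \<in> S") auto
qed (use assms(1,2) f g fg in auto)

definition locally_Euclidean :: "'a topology \<Rightarrow> nat \<Rightarrow> bool" where
  "locally_Euclidean M m \<longleftrightarrow>
     (\<forall>x \<in> topspace M. \<exists>U. openin M U \<and> x \<in> U \<and>
         subtopology M U homeomorphic_space Euclidean_space m)"

lemma manifold_of_dim_iff:
  "manifold_of_dim M m \<longleftrightarrow> connected_space M \<and> Hausdorff_space M \<and> locally_Euclidean M m"
  by (simp add: manifold_of_dim_def locally_Euclidean_def)

lemma chart_mapsD:
  assumes "U \<subseteq> topspace M" "homeomorphic_maps (subtopology M U) (Euclidean_space m) f g"
  shows "continuous_map (subtopology M U) (Euclidean_space m) f"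
    and "continuous_map (Euclidean_space m) M g"
    and "\<And>x. x \<in> U \<Longrightarrow> f x \<in> topspace (Euclidean_space m)"
    and "\<And>y. y \<in> topspace (Euclidean_space m) \<Longrightarrow> g y \<in> U"
    and "\<And>x. x \<in> U \<Longrightarrow> g (f x) = x"
    and "\<And>y. y \<in> topspace (Euclidean_space m) \<Longrightarrow> f (g y) = y"
proof -
  have maps: "continuous_map (subtopology M U) (Euclidean_space m) f"
    "continuous_map (Euclidean_space m) (subtopology M U) g"
    "\<And>x. x \<in> U \<Longrightarrow> g (f x) = x" "\<And>y. y \<in> topspace (Euclidean_space m) \<Longrightarrow> f (g y) = y"
    using assms by (auto simp: homeomorphic_maps_def Int_absorb1)
  then show "continuous_map (subtopology M U) (Euclidean_space m) f"
    "continuous_map (Euclidean_space m) M g"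
    "\<And>x. x \<in> U \<Longrightarrow> g (f x) = x" "\<And>y. y \<in> topspace (Euclidean_space m) \<Longrightarrow> f (g y) = y"
    using continuous_map_into_fulltopology by auto
  show "\<And>x. x \<in> U \<Longrightarrow> f x \<in> topspace (Euclidean_space m)"
    using continuous_map_image_subset_topspace[OF maps(1)] assms(1) by auto
  show "\<And>y. y \<in> topspace (Euclidean_space m) \<Longrightarrow> g y \<in> U"
    using continuous_map_image_subset_topspace[OF maps(2)] assms(1) by auto
qed

lemma locally_Euclidean_open_embedding:
  assumes "locally_Euclidean M m" "topspace M \<noteq> {}"
  obtains e where "continuous_map (Euclidean_space m) M e" "open_map (Euclidean_space m) M e"
    "inj_on e (topspace (Euclidean_space m))"
proof -
  obtain U where "openin M U" "subtopology M U homeomorphic_space Euclidean_space m"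
    using assms unfolding locally_Euclidean_def by blast
  then obtain f g where "homeomorphic_maps (subtopology M U) (Euclidean_space m) f g"
    by (auto simp: homeomorphic_space_def)
  then have g: "homeomorphic_map (Euclidean_space m) (subtopology M U) g"
    using homeomorphic_map_maps homeomorphic_maps_sym by blast
  show ?thesis
    using that continuous_map_into_fulltopology[OF homeomorphic_imp_continuous_map[OF g]]
      open_map_from_open_subtopology[OF \<open>openin M U\<close> homeomorphic_imp_open_map[OF g]]
      homeomorphic_imp_injective_map[OF g]
    by blast
qed

text \<open>Hausdorffness makes the image of the compact support closed, so the extended map is
  glued from two continuous maps on an open cover.\<close>

lemma continuous_map_extend_from_chart:
  assumes "Hausdorff_space M" "openin M U"
    and fg: "homeomorphic_maps (subtopology M U) (Euclidean_space m) f g"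
    and h: "continuous_map (Euclidean_space m) (Euclidean_space m) h"
    and L: "compactin (Euclidean_space m) L"
    and h_fixes: "\<And>x. x \<in> topspace (Euclidean_space m) - L \<Longrightarrow> h x = x"
  shows "continuous_map M M (\<lambda>x. if x \<in> U then g (h (f x)) else x)"
proof (rule continuous_map_cases_openin)
  note chart = chart_mapsD[OF openin_subset[OF assms(2)] fg]
  have "closedin M (g ` L)"
    using compactin_imp_closedin[OF assms(1) image_compactin[OF L chart(2)]] .
  then show "openin M (topspace M - g ` L)"
    by blast
  show "topspace M \<subseteq> U \<union> (topspace M - g ` L)"
    using compactin_subset_topspace[OF L] chart(4) by auto
  show "continuous_map (subtopology M U) M (\<lambda>x. g (h (f x)))"
    using continuous_map_compose[OF continuous_map_compose[OF chart(1) h] chart(2)]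
    by (simp add: o_def)
  show "g (h (f x)) = x" if "x \<in> U \<inter> (topspace M - g ` L)" for x
  proof -
    have "f x \<notin> L"
      using that chart(5) by (metis Diff_iff IntE image_eqI)
    then show ?thesis
      using that chart(3,5) h_fixes by auto
  qed
qed (use assms(2) in \<open>simp_all add: continuous_map_from_subtopology\<close>)

lemma homeomorphic_maps_extend_from_chart:
  assumes "Hausdorff_space M" "openin M U"
    and fg: "homeomorphic_maps (subtopology M U) (Euclidean_space m) f g"
    and \<psi>: "homeomorphic_maps (Euclidean_space m) (Euclidean_space m) \<psi> \<psi>'"
    and L: "compactin (Euclidean_space m) L"
    and fixed: "\<And>x. x \<in> topspace (Euclidean_space m) - L \<Longrightarrow> \<psi> x = x \<and> \<psi>' x = x"
  shows "homeomorphic_maps M M (\<lambda>x. if x \<in> U then g (\<psi> (f x)) else x)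
                               (\<lambda>x. if x \<in> U then g (\<psi>' (f x)) else x)"
proof -
  note chart = chart_mapsD[OF openin_subset[OF assms(2)] fg]
  have \<psi>_cont: "continuous_map (Euclidean_space m) (Euclidean_space m) \<psi>"
    "continuous_map (Euclidean_space m) (Euclidean_space m) \<psi>'"
    using \<psi> by (auto simp: homeomorphic_maps_def)
  have \<psi>_inverse: "\<And>x. x \<in> topspace (Euclidean_space m) \<Longrightarrow> \<psi>' (\<psi> x) = x"
    "\<And>x. x \<in> topspace (Euclidean_space m) \<Longrightarrow> \<psi> (\<psi>' x) = x"
    "\<And>x. x \<in> topspace (Euclidean_space m) \<Longrightarrow> \<psi> x \<in> topspace (Euclidean_space m)"
    "\<And>x. x \<in> topspace (Euclidean_space m) \<Longrightarrow> \<psi>' x \<in> topspace (Euclidean_space m)"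
    using \<psi> by (auto simp: homeomorphic_maps_def dest: continuous_map_image_subset_topspace)
  have "\<And>x. x \<in> topspace (Euclidean_space m) - L \<Longrightarrow> \<psi> x = x"
    "\<And>x. x \<in> topspace (Euclidean_space m) - L \<Longrightarrow> \<psi>' x = x"
    using fixed by simp_all
  then show ?thesis
    unfolding homeomorphic_maps_def
    using continuous_map_extend_from_chart[OF assms(1,2) fg \<psi>_cont(1) L]
      continuous_map_extend_from_chart[OF assms(1,2) fg \<psi>_cont(2) L]
      fixed \<psi>_inverse chart(3-6)
    by auto
qed

section \<open>Homogeneity of manifolds\<close>

definition homeo_moves :: "'a topology \<Rightarrow> 'a set \<Rightarrow> 'a \<Rightarrow> 'a \<Rightarrow> bool" where
  "homeo_moves M K p q \<longleftrightarrow>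
     (\<exists>\<phi> \<phi>'. homeomorphic_maps M M \<phi> \<phi>' \<and> \<phi> p = q \<and> (\<forall>x \<in> K. \<phi> x = x))"

lemma homeo_moves_refl: "homeo_moves M K p p"
  unfolding homeo_moves_def using homeomorphic_maps_id by fastforce

lemma homeo_moves_trans:
  assumes "homeo_moves M K p q" "homeo_moves M K q s"
  shows "homeo_moves M K p s"
proof -
  obtain \<phi> \<phi>' where \<phi>: "homeomorphic_maps M M \<phi> \<phi>'" "\<phi> p = q" "\<forall>x \<in> K. \<phi> x = x"
    using assms(1) by (auto simp: homeo_moves_def)
  obtain \<theta> \<theta>' where \<theta>: "homeomorphic_maps M M \<theta> \<theta>'" "\<theta> q = s" "\<forall>x \<in> K. \<theta> x = x"
    using assms(2) by (auto simp: homeo_moves_def)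
  have "homeomorphic_maps M M (\<theta> \<circ> \<phi>) (\<phi>' \<circ> \<theta>')"
    using homeomorphic_maps_compose \<phi>(1) \<theta>(1) by blast
  then show ?thesis
    unfolding homeo_moves_def using \<phi>(2,3) \<theta>(2,3) by force
qed

lemma homeo_moves_sym:
  assumes "homeo_moves M K p q" "p \<in> topspace M" "K \<subseteq> topspace M"
  shows "homeo_moves M K q p"
proof -
  obtain \<phi> \<phi>' where \<phi>: "homeomorphic_maps M M \<phi> \<phi>'" "\<phi> p = q" "\<forall>x \<in> K. \<phi> x = x"
    using assms(1) by (auto simp: homeo_moves_def)
  have inverse: "\<phi>' (\<phi> x) = x" if "x \<in> topspace M" for x
    using \<phi>(1) that by (simp add: homeomorphic_maps_def)
  have "homeomorphic_maps M M \<phi>' \<phi>"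
    using \<phi>(1) homeomorphic_maps_sym by blast
  moreover have "\<phi>' q = p"
    using inverse[OF assms(2)] \<phi>(2) by simp
  moreover have "\<forall>x \<in> K. \<phi>' x = x"
    using inverse \<phi>(3) assms(3) by (metis subsetD)
  ultimately show ?thesis
    unfolding homeo_moves_def by blast
qed

lemma homeo_moves_mono:
  assumes "homeo_moves M K p q" "K' \<subseteq> K"
  shows "homeo_moves M K' p q"
  using assms unfolding homeo_moves_def by blast

lemma homeo_moves_within_chart:
  assumes "Hausdorff_space M" "openin M U"
    and fg: "homeomorphic_maps (subtopology M U) (Euclidean_space m) f g"
    and "y \<in> U" "z \<in> U" "l1_dist m (f z) (f y) < r"
  shows "homeo_moves M (topspace M - g ` l1_cball m (f y) r) y z"
proof -
  note chart = chart_mapsD[OF openin_subset[OF assms(2)] fg]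
  obtain \<psi> \<psi>' where \<psi>: "homeomorphic_maps (Euclidean_space m) (Euclidean_space m) \<psi> \<psi>'"
    "\<psi> (f y) = f z"
    and \<psi>_fixed: "\<And>x. x \<in> topspace (Euclidean_space m) - l1_ball m (f y) r \<Longrightarrow> \<psi> x = x \<and> \<psi>' x = x"
    using Euclidean_space_homeomorphism_moving_point[OF chart(3)[OF \<open>y \<in> U\<close>] chart(3)[OF \<open>z \<in> U\<close>]
        assms(6)]
    by blast
  define \<phi> where "\<phi> x = (if x \<in> U then g (\<psi> (f x)) else x)" for x
  define \<phi>' where "\<phi>' x = (if x \<in> U then g (\<psi>' (f x)) else x)" for x
  have "\<psi> x = x \<and> \<psi>' x = x" if "x \<in> topspace (Euclidean_space m) - l1_cball m (f y) r" for x
    using \<psi>_fixed[of x] that l1_ball_subset_cball by blast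
  then have "homeomorphic_maps M M \<phi> \<phi>'"
    unfolding \<phi>_def \<phi>'_def
    by (rule homeomorphic_maps_extend_from_chart[OF assms(1,2) fg \<psi>(1) compactin_l1_cball])
  moreover have "\<phi> y = z"
    using \<psi>(2) assms(4,5) chart(5) by (simp add: \<phi>_def)
  moreover have "\<phi> x = x" if "x \<in> topspace M - g ` l1_cball m (f y) r" for x
  proof (cases "x \<in> U")
    case True
    then have "f x \<notin> l1_cball m (f y) r"
      using that chart(5) by (metis Diff_iff image_eqI)
    then have "f x \<notin> l1_ball m (f y) r"
      using l1_ball_subset_cball[of m "f y" r] by blast
    then show ?thesis
      using \<psi>_fixed[of "f x"] chart(3,5)[OF True] True by (simp add: \<phi>_def)
  qed (simp add: \<phi>_def)
  ultimately show ?thesis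
    unfolding homeo_moves_def by blast
qed

lemma locally_Euclidean_local_homogeneity:
  assumes "Hausdorff_space M" "locally_Euclidean M m" "openin M G" "y \<in> G"
  obtains N where "openin M N" "y \<in> N" "N \<subseteq> G"
    "\<And>z. z \<in> N \<Longrightarrow> homeo_moves M (topspace M - G) y z"
proof -
  obtain U where U: "openin M U" "y \<in> U" "subtopology M U homeomorphic_space Euclidean_space m"
    using assms openin_subset by (force simp: locally_Euclidean_def)
  then obtain f g where fg: "homeomorphic_maps (subtopology M U) (Euclidean_space m) f g"
    by (auto simp: homeomorphic_space_def)
  note chart = chart_mapsD[OF openin_subset[OF U(1)] fg]
  have "openin (Euclidean_space m) (f ` (U \<inter> G))"
  proof -
    have "homeomorphic_map (subtopology M U) (Euclidean_space m) f"
      using fg homeomorphic_map_maps by blast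
    moreover have "openin (subtopology M U) (U \<inter> G)"
      using assms(3) by (rule openin_subtopology_Int2)
    ultimately show ?thesis
      using homeomorphic_map_openness_eq by blast
  qed
  moreover have "f y \<in> f ` (U \<inter> G)"
    using U(2) assms(4) by simp
  ultimately obtain \<rho> where "\<rho> > 0" and \<rho>: "l1_ball m (f y) \<rho> \<subseteq> f ` (U \<inter> G)"
    using openin_Euclidean_space_contains_l1_ball by blast
  define r where "r = \<rho> / 2"
  have "0 < r" "r < \<rho>"
    using \<open>\<rho> > 0\<close> by (simp_all add: r_def)
  have "g ` l1_cball m (f y) r \<subseteq> G"
  proof
    fix x assume "x \<in> g ` l1_cball m (f y) r"
    then obtain w where "w \<in> l1_cball m (f y) r" "x = g w"
      by blast
    then have "x \<in> g ` f ` (U \<inter> G)"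
      using \<rho> \<open>r < \<rho>\<close> by (auto simp: l1_ball_def l1_cball_def)
    then show "x \<in> G"
      using chart(5) by auto
  qed
  then have moves: "homeo_moves M (topspace M - G) y z"
    if "z \<in> U" "l1_dist m (f z) (f y) < r" for z
    by (intro homeo_moves_mono[OF homeo_moves_within_chart[OF assms(1) U(1) fg U(2) that]]) blast
  define N where "N = {z \<in> topspace (subtopology M U). f z \<in> l1_ball m (f y) r}"
  have "openin (subtopology M U) N"
    unfolding N_def by (rule openin_continuous_map_preimage[OF chart(1) openin_l1_ball])
  then have "openin M N"
    using U(1) openin_trans_full by blast
  moreover have "y \<in> N"
    using U(2) openin_subset[OF U(1)] chart(3) \<open>0 < r\<close> by (auto simp: N_def l1_ball_def)
  moreover have "N \<subseteq> G"
  proof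
    fix z assume "z \<in> N"
    then have "z \<in> U" "f z \<in> l1_cball m (f y) r"
      using l1_ball_subset_cball by (auto simp: N_def)
    then have "g (f z) \<in> G"
      using \<open>g ` l1_cball m (f y) r \<subseteq> G\<close> by blast
    then show "z \<in> G"
      using chart(5) \<open>z \<in> U\<close> by simp
  qed
  moreover have "homeo_moves M (topspace M - G) y z" if "z \<in> N" for z
    using that moves by (auto simp: N_def l1_ball_def)
  ultimately show ?thesis
    by (rule that)
qed

lemma openin_homeo_moves_orbit:
  assumes "Hausdorff_space M" "locally_Euclidean M m" "closedin M K"
  shows "openin M {q \<in> topspace M - K. homeo_moves M K c q}"
    and "openin M {q \<in> topspace M - K. \<not> homeo_moves M K c q}"
proof -
  have KM: "K \<subseteq> topspace M"
    using assms(3) closedin_subset by blast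
  have "openin M (topspace M - K)"
    using assms(3) by blast
  have same_orbit: "\<exists>N. openin M N \<and> q \<in> N \<and> N \<subseteq> topspace M - K \<and>
                       (\<forall>z \<in> N. homeo_moves M K c z \<longleftrightarrow> homeo_moves M K c q)"
    if q: "q \<in> topspace M - K" for q
  proof -
    obtain N where N: "openin M N" "q \<in> N" "N \<subseteq> topspace M - K"
      "\<And>z. z \<in> N \<Longrightarrow> homeo_moves M (topspace M - (topspace M - K)) q z"
      by (rule locally_Euclidean_local_homogeneity[OF assms(1,2) \<open>openin M (topspace M - K)\<close> q])
        blast
    have "homeo_moves M K c z \<longleftrightarrow> homeo_moves M K c q" if "z \<in> N" for z
    proof
      have qz: "homeo_moves M K q z"
        using N(4)[OF that] KM by (simp add: Diff_Diff_Int Int_absorb1)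
      show "homeo_moves M K c z" if "homeo_moves M K c q"
        using that qz by (rule homeo_moves_trans)
      show "homeo_moves M K c q" if "homeo_moves M K c z"
        using that homeo_moves_sym[OF qz _ KM] q by (blast intro: homeo_moves_trans)
    qed
    then show ?thesis
      using N(1-3) by blast
  qed
  show "openin M {q \<in> topspace M - K. homeo_moves M K c q}"
  proof (subst openin_subopen, intro ballI)
    fix q assume q: "q \<in> {q \<in> topspace M - K. homeo_moves M K c q}"
    then obtain N where "openin M N" "q \<in> N" "N \<subseteq> topspace M - K"
      "\<forall>z \<in> N. homeo_moves M K c z \<longleftrightarrow> homeo_moves M K c q"
      using same_orbit[of q] by auto
    then show "\<exists>T. openin M T \<and> q \<in> T \<and> T \<subseteq> {q \<in> topspace M - K. homeo_moves M K c q}"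
      using q by blast
  qed
  show "openin M {q \<in> topspace M - K. \<not> homeo_moves M K c q}"
  proof (subst openin_subopen, intro ballI)
    fix q assume q: "q \<in> {q \<in> topspace M - K. \<not> homeo_moves M K c q}"
    then obtain N where "openin M N" "q \<in> N" "N \<subseteq> topspace M - K"
      "\<forall>z \<in> N. homeo_moves M K c z \<longleftrightarrow> homeo_moves M K c q"
      using same_orbit[of q] by auto
    then show "\<exists>T. openin M T \<and> q \<in> T \<and> T \<subseteq> {q \<in> topspace M - K. \<not> homeo_moves M K c q}"
      using q by blast
  qed
qed

text \<open>If the orbit of \<open>c\<close> missed \<open>U \<supseteq> K\<close>, it would be clopen in the connected space \<open>M\<close>.\<close>

lemma homeo_moves_from_open:
  assumes "connected_space M" "Hausdorff_space M" "locally_Euclidean M m"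
    and "closedin M K" "openin M U" "K \<subseteq> U" "U \<noteq> {}" "c \<in> topspace M"
  obtains p where "p \<in> U" "homeo_moves M K p c"
proof (cases "c \<in> K")
  case True
  then show ?thesis
    using assms(6) by (intro that[of c] homeo_moves_refl) auto
next
  case False
  define A where "A = {q \<in> topspace M - K. homeo_moves M K c q}"
  have KM: "K \<subseteq> topspace M" and UM: "U \<subseteq> topspace M"
    using assms(4,5) closedin_subset openin_subset by blast+
  have "A \<inter> U \<noteq> {}"
  proof
    assume "A \<inter> U = {}"
    then have "topspace M - A = U \<union> {q \<in> topspace M - K. \<not> homeo_moves M K c q}"
      using assms(6) UM by (auto simp: A_def)
    then have "closedin M A"
      using openin_homeo_moves_orbit[OF assms(2-4)] assms(5)
      by (metis (no_types, lifting) A_def closedin_def openin_Un openin_subset)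
    moreover have "c \<in> A"
      using False assms(8) homeo_moves_refl by (simp add: A_def)
    ultimately have "A = topspace M"
      using openin_homeo_moves_orbit(1)[OF assms(2-4)] assms(1) connected_space_clopen_in
      unfolding A_def by blast
    then show False
      using \<open>A \<inter> U = {}\<close> UM assms(7) by blast
  qed
  then obtain p where "p \<in> U" "homeo_moves M K c p"
    by (auto simp: A_def)
  then show ?thesis
    using homeo_moves_sym[OF _ assms(8) KM] by (intro that[of p]) auto
qed

section \<open>Open cells containing a countable set\<close>

lemma open_embedding_limit:
  assumes B_open: "\<And>n. openin X (B n)" and B_mono: "\<And>n. B n \<subseteq> B (Suc n)"
    and B_cover: "topspace X \<subseteq> (\<Union>n. B n)"
    and e_cont: "\<And>n. continuous_map X Y (e n)" and e_open: "\<And>n. open_map X Y (e n)"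
    and e_inj: "\<And>n. inj_on (e n) (topspace X)"
    and e_agree: "\<And>n x. x \<in> B n \<Longrightarrow> e (Suc n) x = e n x"
  obtains h where "continuous_map X Y h" "open_map X Y h" "inj_on h (topspace X)"
    "\<And>n x. x \<in> B n \<Longrightarrow> h x = e n x"
proof -
  have B_mono_le: "B n \<subseteq> B k" if "n \<le> k" for n k
    using lift_Suc_mono_le[of B, OF B_mono that] .
  have agree_le: "e k x = e n x" if "n \<le> k" "x \<in> B n" for n k x
    using that(1)
  proof (induction k rule: dec_induct)
    case (step k)
    then show ?case
      using e_agree B_mono_le[OF step(1)] that(2) by auto
  qed simp
  have agree: "e i x = e j x" if "x \<in> B i" "x \<in> B j" for i j x
    using agree_le[of i "max i j" x] agree_le[of j "max i j" x] that by simp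
  obtain h where h: "continuous_map X Y h"
    and h_eq': "\<And>x n. \<lbrakk>n \<in> UNIV; x \<in> topspace X \<inter> B n\<rbrakk> \<Longrightarrow> h x = e n x"
  proof (rule pasting_lemma_exists[where I = UNIV and T = B and f = e])
    show "continuous_map (subtopology X (B n)) Y (e n)" for n
      using e_cont by (rule continuous_map_from_subtopology)
  qed (use B_cover B_open agree in auto)
  have h_eq: "h x = e n x" if "x \<in> B n" for n x
    using h_eq' that openin_subset[OF B_open] by blast
  have "open_map X Y h"
    unfolding open_map_def
  proof (intro allI impI)
    fix T assume T: "openin X T"
    have "h ` T = (\<Union>n. e n ` (T \<inter> B n))"
    proof (intro equalityI subsetI)
      fix y assume "y \<in> h ` T"
      then obtain x where x: "x \<in> T" "y = h x"
        by blast
      moreover obtain n where "x \<in> B n"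
        using B_cover openin_subset[OF T] x(1) by blast
      ultimately show "y \<in> (\<Union>n. e n ` (T \<inter> B n))"
        using h_eq by blast
    next
      fix y assume "y \<in> (\<Union>n. e n ` (T \<inter> B n))"
      then obtain n x where "x \<in> T" "x \<in> B n" "y = e n x"
        by blast
      then show "y \<in> h ` T"
        using h_eq by (metis image_eqI)
    qed
    moreover have "openin Y (e n ` (T \<inter> B n))" for n
      using e_open[of n] T B_open[of n] by (simp add: open_map_def openin_Int)
    ultimately show "openin Y (h ` T)"
      by auto
  qed
  moreover have "inj_on h (topspace X)"
  proof (rule inj_onI)
    fix x y assume xy: "x \<in> topspace X" "y \<in> topspace X" "h x = h y"
    then obtain i j where "x \<in> B i" "y \<in> B j"
      using B_cover by blast
    then have "x \<in> B (max i j)" "y \<in> B (max i j)"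
      using B_mono_le[of i "max i j"] B_mono_le[of j "max i j"] by auto
    then show "x = y"
      using xy h_eq e_inj inj_onD by metis
  qed
  ultimately show ?thesis
    using that h h_eq by blast
qed

lemma open_embedding_absorbing_point:
  assumes "connected_space M" "Hausdorff_space M" "locally_Euclidean M m"
    and e: "continuous_map (Euclidean_space m) M e" "open_map (Euclidean_space m) M e"
    and "c \<in> topspace M"
  obtains \<psi> r' where "homeomorphic_map M M \<psi>" "r + 1 \<le> r'"
    "\<And>x. x \<in> l1_cball m a r \<Longrightarrow> \<psi> (e x) = e x" "c \<in> \<psi> ` e ` l1_ball m a r'"
proof -
  define E where "E = topspace (Euclidean_space m)"
  define K where "K = e ` l1_cball m a r"
  have "closedin M K"
    unfolding K_def
    using compactin_imp_closedin[OF assms(2) image_compactin[OF compactin_l1_cball e(1)]] .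
  moreover have "openin M (e ` E)"
    using e(2) by (simp add: open_map_def E_def)
  moreover have "K \<subseteq> e ` E"
    by (auto simp: K_def l1_cball_def E_def)
  moreover have "e ` E \<noteq> {}"
    using nontrivial_Euclidean_space[of m] by (auto simp: E_def)
  ultimately obtain p where "p \<in> e ` E" "homeo_moves M K p c"
    using homeo_moves_from_open[OF assms(1-3) _ _ _ _ \<open>c \<in> topspace M\<close>] by metis
  then obtain y \<psi> \<psi>' where y: "y \<in> E" and \<psi>: "homeomorphic_maps M M \<psi> \<psi>'" "\<psi> (e y) = c"
    "\<forall>x \<in> K. \<psi> x = x"
    by (auto simp: homeo_moves_def)
  show ?thesis
  proof
    show "homeomorphic_map M M \<psi>"
      using \<psi>(1) homeomorphic_map_maps by blast
    show "r + 1 \<le> max (r + 1) (l1_dist m y a + 1)"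
      by simp
    show "\<psi> (e x) = e x" if "x \<in> l1_cball m a r" for x
      using \<psi>(3) that by (simp add: K_def)
    have "y \<in> l1_ball m a (max (r + 1) (l1_dist m y a + 1))"
      using y by (simp add: l1_ball_def E_def)
    then show "c \<in> \<psi> ` e ` l1_ball m a (max (r + 1) (l1_dist m y a + 1))"
      using \<psi>(2) by blast
  qed
qed

lemma open_embedding_sequence_absorbing:
  assumes "connected_space M" "Hausdorff_space M" "locally_Euclidean M m"
    and e0: "continuous_map (Euclidean_space m) M e0" "open_map (Euclidean_space m) M e0"
      "inj_on e0 (topspace (Euclidean_space m))"
    and c: "range c \<subseteq> topspace M"
  obtains e R where "\<And>n. continuous_map (Euclidean_space m) M (e n)"
    "\<And>n. open_map (Euclidean_space m) M (e n)" "\<And>n. inj_on (e n) (topspace (Euclidean_space m))"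
    "\<And>n. real n \<le> R n" "\<And>n. R n \<le> R (Suc n)"
    "\<And>n x. x \<in> l1_cball m a (R n) \<Longrightarrow> e (Suc n) x = e n x"
    "\<And>n. c n \<in> e (Suc n) ` l1_ball m a (R (Suc n))"
proof -
  define E where "E = topspace (Euclidean_space m)"
  define P where "P n = (\<lambda>(e, r). continuous_map (Euclidean_space m) M e \<and>
                    open_map (Euclidean_space m) M e \<and> inj_on e E \<and> real n \<le> r)" for n
  define Q where "Q n = (\<lambda>(e, r) (e', r'). r + 1 \<le> r' \<and> (\<forall>x \<in> l1_cball m a r. e' x = e x) \<and>
                    c n \<in> e' ` l1_ball m a r')" for n
  have "\<exists>s. \<forall>n. P n (s n) \<and> Q n (s n) (s (Suc n))"
  proof (rule dependent_nat_choice)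
    show "\<exists>s. P 0 s"
      using e0 by (auto simp: P_def E_def)
  next
    fix s n assume "P n s"
    then obtain e r where s: "s = (e, r)" and e: "continuous_map (Euclidean_space m) M e"
      "open_map (Euclidean_space m) M e" "inj_on e E" "real n \<le> r"
      by (auto simp: P_def)
    have "c n \<in> topspace M"
      using c by blast
    then obtain \<psi> r' where \<psi>: "homeomorphic_map M M \<psi>" "r + 1 \<le> r'"
      "\<And>x. x \<in> l1_cball m a r \<Longrightarrow> \<psi> (e x) = e x" "c n \<in> \<psi> ` e ` l1_ball m a r'"
      by (rule open_embedding_absorbing_point[OF assms(1-3) e(1,2), where r = r and a = a]) blast
    have eM: "e ` E \<subseteq> topspace M"
      using e(1) by (auto simp: E_def dest: continuous_map_image_subset_topspace)
    have "continuous_map (Euclidean_space m) M (\<psi> \<circ> e)"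
      using e(1) homeomorphic_imp_continuous_map[OF \<psi>(1)] by (rule continuous_map_compose)
    moreover have "open_map (Euclidean_space m) M (\<psi> \<circ> e)"
      using e(2) homeomorphic_imp_open_map[OF \<psi>(1)] by (rule open_map_compose)
    moreover have "inj_on (\<psi> \<circ> e) E"
      using e(3) inj_on_subset[OF homeomorphic_imp_injective_map[OF \<psi>(1)] eM] by (rule comp_inj_on)
    ultimately have "P (Suc n) (\<psi> \<circ> e, r')"
      using e(4) \<psi>(2) by (simp add: P_def)
    moreover have "Q n s (\<psi> \<circ> e, r')"
      using \<psi> by (simp add: Q_def s image_comp)
    ultimately show "\<exists>t. P (Suc n) t \<and> Q n s t"
      by blast
  qed
  then obtain s where s: "\<And>n. P n (s n) \<and> Q n (s n) (s (Suc n))"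
    by blast
  show ?thesis
  proof
    fix n
    show "continuous_map (Euclidean_space m) M (fst (s n))" "open_map (Euclidean_space m) M (fst (s n))"
      "inj_on (fst (s n)) (topspace (Euclidean_space m))" "real n \<le> snd (s n)"
      "snd (s n) \<le> snd (s (Suc n))" "c n \<in> fst (s (Suc n)) ` l1_ball m a (snd (s (Suc n)))"
      using s[of n] by (auto simp: P_def Q_def E_def split: prod.splits)
    show "fst (s (Suc n)) x = fst (s n) x" if "x \<in> l1_cball m a (snd (s n))" for x
      using s[of n] that by (auto simp: Q_def split: prod.splits)
  qed
qed

lemma locally_Euclidean_countable_subset_in_cell:
  assumes "connected_space M" "Hausdorff_space M" "locally_Euclidean M m" "topspace M \<noteq> {}"
    and "countable C" "C \<subseteq> topspace M"
  obtains W where "openin M W" "C \<subseteq> W" "subtopology M W homeomorphic_space Euclidean_space m"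
proof -
  define E where "E = topspace (Euclidean_space m)"
  define origin :: "nat \<Rightarrow> real" where "origin = (\<lambda>_. 0)"
  obtain c :: "nat \<Rightarrow> 'a" where c: "C \<subseteq> range c" "range c \<subseteq> topspace M"
  proof (cases "C = {}")
    case True
    obtain x0 where "x0 \<in> topspace M"
      using assms(4) by blast
    then show ?thesis
      using True that[of "\<lambda>_. x0"] by auto
  next
    case False
    then show ?thesis
      using assms(5,6) that[of "from_nat_into C"] by (simp add: range_from_nat_into)
  qed
  obtain e0 where e0: "continuous_map (Euclidean_space m) M e0" "open_map (Euclidean_space m) M e0"
    "inj_on e0 (topspace (Euclidean_space m))"
    by (rule locally_Euclidean_open_embedding[OF assms(3,4)]) blast
  obtain e R where e: "\<And>n. continuous_map (Euclidean_space m) M (e n)"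
    "\<And>n. open_map (Euclidean_space m) M (e n)" "\<And>n. inj_on (e n) (topspace (Euclidean_space m))"
    and R: "\<And>n. real n \<le> R n" "\<And>n. R n \<le> R (Suc n)"
    and e_agree: "\<And>n x. x \<in> l1_cball m origin (R n) \<Longrightarrow> e (Suc n) x = e n x"
    and c_in: "\<And>n. c n \<in> e (Suc n) ` l1_ball m origin (R (Suc n))"
    by (rule open_embedding_sequence_absorbing[OF assms(1-3) e0 c(2), where a = origin]) blast
  obtain h where h: "continuous_map (Euclidean_space m) M h" "open_map (Euclidean_space m) M h"
    "inj_on h E" and h_eq: "\<And>n x. x \<in> l1_ball m origin (R n) \<Longrightarrow> h x = e n x"
  proof (rule open_embedding_limit[where B = "\<lambda>n. l1_ball m origin (R n)" and e = e])
    show "l1_ball m origin (R n) \<subseteq> l1_ball m origin (R (Suc n))" for n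
      using R(2)[of n] by (auto simp: l1_ball_def)
    show "topspace (Euclidean_space m) \<subseteq> (\<Union>n. l1_ball m origin (R n))"
    proof
      fix x assume "x \<in> topspace (Euclidean_space m)"
      moreover obtain n where "l1_dist m x origin < real n"
        using reals_Archimedean2 by blast
      ultimately have "x \<in> l1_ball m origin (R n)"
        using R(1)[of n] by (simp add: l1_ball_def)
      then show "x \<in> (\<Union>n. l1_ball m origin (R n))"
        by blast
    qed
    show "e (Suc n) x = e n x" if "x \<in> l1_ball m origin (R n)" for n x
      using e_agree that l1_ball_subset_cball[of m origin "R n"] by blast
  qed (use e in \<open>auto simp: openin_l1_ball E_def\<close>)
  define W where "W = h ` E"
  have "openin M W"
    using h(2) by (simp add: open_map_def W_def E_def)
  moreover have "Euclidean_space m homeomorphic_space subtopology M W"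
    using embedding_map_imp_homeomorphic_space[OF injective_open_imp_embedding_map[OF h(1,2)]] h(3)
    by (simp add: W_def E_def)
  moreover have "range c \<subseteq> W"
  proof
    fix p assume "p \<in> range c"
    then obtain n x where x: "x \<in> l1_ball m origin (R (Suc n))" "p = e (Suc n) x"
      using c_in by blast
    then have "p = h x"
      using h_eq by simp
    then show "p \<in> W"
      using x(1) by (simp add: W_def E_def l1_ball_def)
  qed
  ultimately show ?thesis
    using c(1) homeomorphic_space_sym[of "Euclidean_space m"] by (intro that[of W]) auto
qed

lemma arc_joining_in_Euclidean_subspace:
  assumes "Hausdorff_space M" "W \<subseteq> topspace M"
    and "subtopology M W homeomorphic_space Euclidean_space m"
    and "x \<in> W" "y \<in> W" "x \<noteq> y"
  shows "arc_joining M x y"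
proof -
  define E where "E = topspace (Euclidean_space m)"
  obtain F G where FG: "homeomorphic_maps (subtopology M W) (Euclidean_space m) F G"
    using assms(3) by (auto simp: homeomorphic_space_def)
  have G_homeo: "homeomorphic_map (Euclidean_space m) (subtopology M W) G"
    using FG homeomorphic_map_maps homeomorphic_maps_sym by blast
  then have G: "continuous_map (Euclidean_space m) M G" "inj_on G E"
    using continuous_map_into_fulltopology homeomorphic_imp_continuous_map
      homeomorphic_imp_injective_map by (blast, simp add: E_def)
  have F_homeo: "homeomorphic_map (subtopology M W) (Euclidean_space m) F"
    using FG homeomorphic_map_maps by blast
  define a where "a = F x"
  define b where "b = F y"
  have "a \<in> E" "b \<in> E"
    using homeomorphic_imp_surjective_map[OF F_homeo] assms(2,4,5)
    by (auto simp: a_def b_def E_def)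
  have "G a = x" "G b = y"
    using FG assms(2,4,5) by (auto simp: homeomorphic_maps_def a_def b_def)
  then have "a \<noteq> b"
    using assms(6) by blast
  then obtain k where k: "a k \<noteq> b k"
    by (auto simp: fun_eq_iff)
  define l where "l t = (\<lambda>i. a i + t * (b i - a i))" for t :: real
  have l_E: "l t \<in> E" for t
    using \<open>a \<in> E\<close> \<open>b \<in> E\<close> by (simp add: l_def E_def topspace_Euclidean_space)
  have "continuous_map (top_of_set {0..1}) (Euclidean_space m) l"
    unfolding Euclidean_space_def continuous_map_in_subtopology
  proof
    show "continuous_map (top_of_set {0..1}) (powertop_real UNIV) l"
      unfolding continuous_map_componentwise_UNIV l_def by (simp add: continuous_intros)
    show "l \<in> topspace (top_of_set {0..1}) \<rightarrow> {x. \<forall>i\<ge>m. x i = 0}"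
      using l_E by (auto simp: E_def topspace_Euclidean_space)
  qed
  then have "continuous_map (top_of_set {0..1}) M (G \<circ> l)"
    using G(1) by (rule continuous_map_compose)
  moreover have "inj_on (G \<circ> l) (topspace (top_of_set {0..1}))"
  proof (rule inj_onI)
    fix s t assume "(G \<circ> l) s = (G \<circ> l) t"
    then have "l s = l t"
      using inj_onD[OF G(2) _ l_E l_E] by simp
    then show "s = t"
      using k by (simp add: l_def fun_eq_iff) (metis add_left_cancel mult_right_cancel right_minus_eq)
  qed
  moreover have "compact_space (top_of_set {0..1::real})"
    by (simp add: compact_space_subtopology)
  ultimately have "embedding_map (top_of_set {0..1}) M (G \<circ> l)"
    using assms(1) by (simp add: continuous_imp_embedding_map)
  moreover have "(G \<circ> l) 0 = x" "(G \<circ> l) 1 = y"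
    using \<open>G a = x\<close> \<open>G b = y\<close> by (simp_all add: l_def)
  ultimately show ?thesis
    unfolding arc_joining_def by (intro exI[of _ "G \<circ> l"] conjI)
qed

theorem proposition1:
  fixes M :: "'a topology" and m :: nat
  assumes "manifold_of_dim M m" and "topspace M \<noteq> {}"
  shows "(\<forall>C. countable C \<and> C \<subseteq> topspace M \<longrightarrow>
            (\<exists>U. openin M U \<and> C \<subseteq> U \<and>
                 subtopology M U homeomorphic_space Euclidean_space m))
      \<and> (\<forall>x \<in> topspace M. \<forall>y \<in> topspace M. x \<noteq> y \<longrightarrow> arc_joining M x y)"
proof -
  have M: "connected_space M" "Hausdorff_space M" "locally_Euclidean M m"
    using assms(1) by (simp_all add: manifold_of_dim_iff)
  have cell: "\<exists>U. openin M U \<and> C \<subseteq> U \<and> subtopology M U homeomorphic_space Euclidean_space m"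
    if "countable C" "C \<subseteq> topspace M" for C
    by (rule locally_Euclidean_countable_subset_in_cell[OF M assms(2) that]) blast
  have arc: "arc_joining M x y" if xy: "x \<in> topspace M" "y \<in> topspace M" "x \<noteq> y" for x y
  proof -
    obtain U where "openin M U" "{x, y} \<subseteq> U" "subtopology M U homeomorphic_space Euclidean_space m"
      using cell[of "{x, y}"] xy by auto
    then show ?thesis
      using arc_joining_in_Euclidean_subspace[OF M(2) openin_subset, of U] xy(3) by simp
  qed
  show ?thesis
    using cell arc by simp
qed

end
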